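(* Let $\gamma>0$ and let $k:\mathbb R_+\to\mathbb R_+$ be a $C^\infty$ function with $k(0)=\gamma$, $k'(x)>0$ for all $x\ge0$, and $k(x)\to+\infty$ as $x\to+\infty$. Define, for $x\ge0$, $$\Psi(x)=\int_0^x k(u)(e^{\gamma u}-1)\,du,$$ let $\Phi'$ be the inverse function of $\Psi':[0,\infty)\to[0,\infty)$ and $\Phi(x)=\int_0^x\Phi'(u)\,du$ (the convex dual of $\Psi$). Let $$\Phi_0(x)=\Big(\frac{x}{\gamma}+1\Big)\ln\Big(\frac{x}{\gamma}+1\Big)-\frac{x}{\gamma}$$ (the convex dual of $\Psi_0(x)=e^{\gamma x}-\gamma x-1$) and $\Lambda=\Phi_0-\Phi$. Then $$\lim_{x\to+\infty}\frac{\Lambda(x)}{x}=+\infty.$$ *)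

theory Defs
  imports "HOL-Analysis.Analysis"
begin

definition Psi :: "(real \<Rightarrow> real) \<Rightarrow> real \<Rightarrow> real \<Rightarrow> real" where
  "Psi k \<gamma> x = integral {0..x} (\<lambda>u. k u * (exp (\<gamma> * u) - 1))"

definition Psi' :: "(real \<Rightarrow> real) \<Rightarrow> real \<Rightarrow> real \<Rightarrow> real" where
  "Psi' k \<gamma> x = k x * (exp (\<gamma> * x) - 1)"

definition Phi' :: "(real \<Rightarrow> real) \<Rightarrow> real \<Rightarrow> real \<Rightarrow> real" where
  "Phi' k \<gamma> = the_inv_into {0..} (Psi' k \<gamma>)"

definition Phi :: "(real \<Rightarrow> real) \<Rightarrow> real \<Rightarrow> real \<Rightarrow> real" where
  "Phi k \<gamma> x = integral {0..x} (Phi' k \<gamma>)"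

definition Phi0 :: "real \<Rightarrow> real \<Rightarrow> real" where
  "Phi0 \<gamma> x = (x / \<gamma> + 1) * ln (x / \<gamma> + 1) - x / \<gamma>"

definition Lambda :: "(real \<Rightarrow> real) \<Rightarrow> real \<Rightarrow> real \<Rightarrow> real" where
  "Lambda k \<gamma> x = Phi0 \<gamma> x - Phi k \<gamma> x"

end

theory Submission
  imports Defs
begin

text \<open>Since \<open>k \<ge> \<gamma>\<close>, \<open>\<Psi>'\<close> dominates \<open>\<Psi>\<^sub>0'(t) = \<gamma>(e\<^bsup>\<gamma>t\<^esup> - 1)\<close>, so its inverse
  \<open>\<Phi>'\<close> lies below \<open>\<Phi>\<^sub>0'(u) = ln(u/\<gamma> + 1)/\<gamma>\<close>. Because \<open>k \<rightarrow> \<infinity>\<close>, the gap grows: at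
  \<open>u = \<Psi>'(t)\<close> one has \<open>\<Phi>\<^sub>0'(u) - t \<ge> ln(k(t)/2\<gamma>)/\<gamma>\<close>. Thus \<open>\<Lambda>(x) = \<integral>\<^sub>0\<^sup>x (\<Phi>\<^sub>0' - \<Phi>')\<close>
  integrates a function tending to \<open>\<infinity>\<close>, and its average \<open>\<Lambda>(x)/x\<close> tends to \<open>\<infinity>\<close> as well.\<close>

lemma mono_on_atLeast_if_deriv_nonneg:
  fixes f f' :: "real \<Rightarrow> real"
  assumes deriv: "\<And>x. x \<ge> a \<Longrightarrow> (f has_real_derivative f' x) (at x within {a..})"
    and nonneg: "\<And>x. x \<ge> a \<Longrightarrow> f' x \<ge> 0"
  shows "mono_on {a..} f"
proof (rule mono_onI)
  fix x y assume xy: "x \<in> {a..}" "y \<in> {a..}" "x \<le> y"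
  have "(f has_derivative (\<lambda>h. f' z * h)) (at z within {x..y})" if "x \<le> z" "z \<le> y" for z
    by (rule has_derivative_subset[OF deriv[of z, unfolded has_field_derivative_def]])
      (use xy that in auto)
  then obtain z where "z \<in> {x..y}" "f y - f x = f' z * (y - x)"
    using mvt_very_simple[OF \<open>x \<le> y\<close>, of f "\<lambda>z h. f' z * h"] by blast
  moreover have "f' z * (y - x) \<ge> 0"
    using nonneg[of z] xy \<open>z \<in> {x..y}\<close> by simp
  ultimately show "f x \<le> f y"
    by simp
qed

lemma filterlim_divide_const_at_top:
  fixes f :: "'a \<Rightarrow> real"
  assumes "filterlim f at_top F" "c > 0"
  shows "filterlim (\<lambda>x. f x / c) at_top F"
  using filterlim_at_top_mult_tendsto_pos[OF tendsto_const[of "inverse c"] _ assms(1)] assms(2)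
  by (simp add: divide_inverse)

lemma filterlim_integral_average_at_top:
  fixes g :: "real \<Rightarrow> real"
  assumes g_lim: "filterlim g at_top at_top"
    and integrable: "\<And>x. x \<ge> 0 \<Longrightarrow> g integrable_on {0..x}"
  shows "filterlim (\<lambda>x. integral {0..x} g / x) at_top at_top"
  unfolding filterlim_at_top
proof
  fix Z :: real
  define M where "M = max Z 1"
  have M: "M > 0" "M \<ge> Z"
    by (auto simp: M_def)
  obtain N where N: "\<And>u. u \<ge> N \<Longrightarrow> 2 * M \<le> g u"
    using g_lim unfolding filterlim_at_top eventually_at_top_linorder by blast
  define U where "U = max N 0"
  have U: "U \<ge> 0" "\<And>u. u \<ge> U \<Longrightarrow> 2 * M \<le> g u"
    using N by (auto simp: U_def)
  define c where "c = integral {0..U} g"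
  show "eventually (\<lambda>x. Z \<le> integral {0..x} g / x) at_top"
    unfolding eventually_at_top_linorder
  proof (intro exI allI impI)
    fix x assume x: "x \<ge> 2 * U + \<bar>c\<bar> / M + 1"
    moreover have "\<bar>c\<bar> / M \<ge> 0"
      using M(1) by simp
    ultimately have "U \<le> x" "x > 0"
      using U(1) by linarith+
    have "M * (2 * U + \<bar>c\<bar> / M + 1) \<le> M * x"
      using x M(1) by (intro mult_left_mono) auto
    moreover have "M * (2 * U + \<bar>c\<bar> / M + 1) = 2 * M * U + \<bar>c\<bar> + M"
      using M(1) by (simp add: field_simps)
    ultimately have Mx: "2 * M * U + \<bar>c\<bar> \<le> M * x"
      using M(1) by linarith
    have "integral {U..x} (\<lambda>_. 2 * M) \<le> integral {U..x} g"
      using U(2) integrable_subinterval_real[OF integrable[of x]] \<open>U \<le> x\<close> U(1)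
      by (intro integral_le) auto
    then have "2 * M * (x - U) \<le> integral {U..x} g"
      using \<open>U \<le> x\<close> by (simp add: mult_ac)
    moreover have "integral {0..x} g = c + integral {U..x} g"
      using Henstock_Kurzweil_Integration.integral_combine[OF U(1) \<open>U \<le> x\<close> integrable] \<open>x > 0\<close>
      by (simp add: c_def)
    ultimately have "M * x \<le> integral {0..x} g"
      using Mx by (simp add: algebra_simps)
    moreover have "Z * x \<le> M * x"
      using M(2) \<open>x > 0\<close> by (intro mult_right_mono) auto
    ultimately have "Z * x \<le> integral {0..x} g"
      by linarith
    then show "Z \<le> integral {0..x} g / x"
      using \<open>x > 0\<close> by (simp add: pos_le_divide_eq)
  qed
qed

context
  fixes P :: "real \<Rightarrow> real"
  assumes strict_mono: "strict_mono_on {0..} P"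
    and continuous: "continuous_on {0..} P"
    and P_0: "P 0 = 0"
    and P_lim: "filterlim P at_top at_top"
begin

lemma strict_mono_on_atLeast_0_image: "P ` {0..} = {0..}"
proof (intro equalityI subsetI)
  fix u assume "u \<in> P ` {0..}"
  then obtain t where "t \<ge> 0" "u = P t"
    by auto
  then have "P 0 \<le> P t"
    using strict_mono_onD[OF strict_mono, of 0 t] by (cases "t = 0") auto
  then show "u \<in> {0..}"
    using P_0 \<open>u = P t\<close> by simp
next
  fix u :: real assume "u \<in> {0..}"
  obtain N where N: "\<And>t. t \<ge> N \<Longrightarrow> u \<le> P t"
    using P_lim unfolding filterlim_at_top eventually_at_top_linorder by blast
  have "continuous_on {0..max N 0} P"
    using continuous by (rule continuous_on_subset) auto
  then obtain t where "0 \<le> t" "P t = u"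
    using IVT'[of P 0 u "max N 0"] N[of "max N 0"] P_0 \<open>u \<in> {0..}\<close> by auto
  then show "u \<in> P ` {0..}"
    by force
qed

lemma the_inv_into_atLeast_0:
  assumes "u \<ge> 0"
  shows "the_inv_into {0..} P u \<ge> 0" "P (the_inv_into {0..} P u) = u"
proof -
  have inj: "inj_on P {0..}" and u: "u \<in> P ` {0..}"
    using strict_mono_on_imp_inj_on[OF strict_mono] strict_mono_on_atLeast_0_image assms by auto
  show "the_inv_into {0..} P u \<ge> 0"
    using the_inv_into_into[OF inj u, of "{0..}"] by simp
  show "P (the_inv_into {0..} P u) = u"
    by (rule f_the_inv_into_f[OF inj u])
qed

lemma mono_on_the_inv_into_atLeast_0: "mono_on {0..} (the_inv_into {0..} P)"
proof (rule mono_onI, rule ccontr)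
  fix u v :: real
  assume uv: "u \<in> {0..}" "v \<in> {0..}" "u \<le> v"
    and "\<not> the_inv_into {0..} P u \<le> the_inv_into {0..} P v"
  then have "P (the_inv_into {0..} P v) < P (the_inv_into {0..} P u)"
    using the_inv_into_atLeast_0(1) by (intro strict_mono_onD[OF strict_mono]) auto
  then show False
    using uv the_inv_into_atLeast_0(2) by simp
qed

lemma filterlim_the_inv_into_atLeast_0: "filterlim (the_inv_into {0..} P) at_top at_top"
  unfolding filterlim_at_top eventually_at_top_linorder
proof (intro allI exI impI)
  fix T u :: real
  define t where "t = max T 0"
  assume "u \<ge> P t"
  moreover have "P t \<ge> 0"
    using strict_mono_on_atLeast_0_image t_def by auto
  ultimately have "the_inv_into {0..} P (P t) \<le> the_inv_into {0..} P u"
    by (intro mono_onD[OF mono_on_the_inv_into_atLeast_0]) auto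
  then show "T \<le> the_inv_into {0..} P u"
    using the_inv_into_f_f[OF strict_mono_on_imp_inj_on[OF strict_mono], of t]
    by (simp add: t_def)
qed

end

text \<open>\<open>Phi0'\<close> is the inverse of \<open>\<Psi>\<^sub>0'(t) = \<gamma>(e\<^bsup>\<gamma>t\<^esup> - 1)\<close>.\<close>

definition Phi0' :: "real \<Rightarrow> real \<Rightarrow> real" where
  "Phi0' \<gamma> u = ln (u / \<gamma> + 1) / \<gamma>"

lemma has_integral_Phi0':
  assumes "\<gamma> > 0" "x \<ge> 0"
  shows "(Phi0' \<gamma> has_integral Phi0 \<gamma> x) {0..x}"
proof -
  have "(Phi0' \<gamma> has_integral Phi0 \<gamma> x - Phi0 \<gamma> 0) {0..x}"
  proof (rule fundamental_theorem_of_calculus[OF \<open>x \<ge> 0\<close>])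
    fix y assume "y \<in> {0..x}"
    then have "y / \<gamma> + 1 > 0"
      using assms by (simp add: add_nonneg_pos)
    then have "(Phi0 \<gamma> has_real_derivative Phi0' \<gamma> y) (at y)"
      unfolding Phi0_def[abs_def] Phi0'_def using assms
      by (auto intro!: derivative_eq_intros)
    then show "(Phi0 \<gamma> has_vector_derivative Phi0' \<gamma> y) (at y within {0..x})"
      by (simp add: has_real_derivative_iff_has_vector_derivative has_vector_derivative_at_within)
  qed
  then show ?thesis
    by (simp add: Phi0_def)
qed

locale increasing_rate =
  fixes k :: "real \<Rightarrow> real" and \<gamma> :: real
  assumes gamma_pos: "\<gamma> > 0"
    and continuous_k: "continuous_on {0..} k"
    and mono_k: "mono_on {0..} k"
    and k_0: "k 0 = \<gamma>"
    and k_lim: "filterlim k at_top at_top"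
begin

lemma k_ge_gamma: "t \<ge> 0 \<Longrightarrow> k t \<ge> \<gamma>"
  using mono_onD[OF mono_k, of 0 t] k_0 by simp

lemma strict_mono_on_Psi': "strict_mono_on {0..} (Psi' k \<gamma>)"
proof (rule strict_mono_onI)
  fix s t :: real assume st: "s \<in> {0..}" "t \<in> {0..}" "s < t"
  have "k s * (exp (\<gamma> * s) - 1) \<le> k t * (exp (\<gamma> * s) - 1)"
    using mono_onD[OF mono_k] st gamma_pos by (intro mult_right_mono) auto
  also have "\<dots> < k t * (exp (\<gamma> * t) - 1)"
    using k_ge_gamma[of t] st gamma_pos by (intro mult_strict_left_mono) auto
  finally show "Psi' k \<gamma> s < Psi' k \<gamma> t"
    by (simp add: Psi'_def)
qed

lemma continuous_on_Psi': "continuous_on {0..} (Psi' k \<gamma>)"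
  unfolding Psi'_def[abs_def] by (intro continuous_intros continuous_k)

lemma Psi'_0: "Psi' k \<gamma> 0 = 0"
  by (simp add: Psi'_def)

lemma filterlim_Psi': "filterlim (Psi' k \<gamma>) at_top at_top"
proof (rule filterlim_at_top_mono)
  show "filterlim (\<lambda>t. k t * (exp \<gamma> - 1)) at_top at_top"
    using gamma_pos by (intro filterlim_at_top_mult_tendsto_pos[OF tendsto_const _ k_lim]) auto
  show "eventually (\<lambda>t. k t * (exp \<gamma> - 1) \<le> Psi' k \<gamma> t) at_top"
    using eventually_ge_at_top[of 1]
  proof eventually_elim
    case (elim t)
    then show ?case
      unfolding Psi'_def using k_ge_gamma[of t] gamma_pos by (intro mult_left_mono) auto
  qed
qed

lemmas Psi'_Phi' = the_inv_into_atLeast_0(2)[OF strict_mono_on_Psi' continuous_on_Psi' Psi'_0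
    filterlim_Psi', folded Phi'_def]
  and mono_on_Phi' = mono_on_the_inv_into_atLeast_0[OF strict_mono_on_Psi' continuous_on_Psi' Psi'_0
    filterlim_Psi', folded Phi'_def]
  and filterlim_Phi' = filterlim_the_inv_into_atLeast_0[OF strict_mono_on_Psi' continuous_on_Psi'
    Psi'_0 filterlim_Psi', folded Phi'_def]

lemma Phi'_Psi': "t \<ge> 0 \<Longrightarrow> Phi' k \<gamma> (Psi' k \<gamma> t) = t"
  unfolding Phi'_def by (rule the_inv_into_f_f[OF strict_mono_on_imp_inj_on[OF strict_mono_on_Psi']]) simp

lemma Phi0'_Psi'_ge:
  assumes "t \<ge> ln 2 / \<gamma>"
  shows "t + ln (k t / (2 * \<gamma>)) / \<gamma> \<le> Phi0' \<gamma> (Psi' k \<gamma> t)"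
proof -
  define m where "m = k t / \<gamma>"
  define E where "E = exp (\<gamma> * t)"
  have "ln 2 \<le> \<gamma> * t"
    using assms gamma_pos by (simp add: pos_divide_le_eq mult.commute)
  then have "exp (ln 2) \<le> E"
    unfolding E_def by (rule exp_mono)
  then have "E \<ge> 2"
    by simp
  have "ln 2 / \<gamma> \<ge> 0"
    using gamma_pos by simp
  then have "t \<ge> 0"
    using assms by linarith
  have "m \<ge> 1"
    using k_ge_gamma[OF \<open>t \<ge> 0\<close>] gamma_pos by (simp add: m_def)
  \<comment> \<open>\<open>m(E - 1) + 1 \<ge> mE/2\<close> once \<open>E \<ge> 2\<close>, which costs only the constant \<open>ln 2\<close>.\<close>
  have "m * (E / 2 - 1) \<ge> 0"
    using \<open>m \<ge> 1\<close> \<open>E \<ge> 2\<close> by simp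
  then have "m * E / 2 \<le> m * (E - 1) + 1"
    by (simp add: algebra_simps)
  moreover have "m * E / 2 > 0"
    using \<open>m \<ge> 1\<close> \<open>E \<ge> 2\<close> by simp
  ultimately have "ln (m * E / 2) \<le> ln (m * (E - 1) + 1)"
    by (subst ln_le_cancel_iff) auto
  moreover have "m * (E - 1) + 1 = Psi' k \<gamma> t / \<gamma> + 1"
    using gamma_pos by (simp add: Psi'_def m_def E_def)
  moreover have "k t / (2 * \<gamma>) > 0"
    using k_ge_gamma[OF \<open>t \<ge> 0\<close>] gamma_pos by simp
  then have "ln (m * E / 2) = ln (k t / (2 * \<gamma>)) + \<gamma> * t"
    using ln_mult_pos[OF _ exp_gt_zero, of "k t / (2 * \<gamma>)" "\<gamma> * t"]
    by (simp add: m_def E_def mult.commute[of \<gamma> 2])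
  ultimately have "\<gamma> * t + ln (k t / (2 * \<gamma>)) \<le> ln (Psi' k \<gamma> t / \<gamma> + 1)"
    by simp
  then have "(\<gamma> * t + ln (k t / (2 * \<gamma>))) / \<gamma> \<le> ln (Psi' k \<gamma> t / \<gamma> + 1) / \<gamma>"
    using gamma_pos by (intro divide_right_mono) auto
  then show ?thesis
    using gamma_pos by (simp add: Phi0'_def add_divide_distrib)
qed

lemma filterlim_Phi0'_minus_Phi': "filterlim (\<lambda>u. Phi0' \<gamma> u - Phi' k \<gamma> u) at_top at_top"
proof (rule filterlim_at_top_mono)
  have "filterlim (\<lambda>u. k (Phi' k \<gamma> u)) at_top at_top"
    by (rule filterlim_compose[OF k_lim filterlim_Phi'])
  then show "filterlim (\<lambda>u. ln (k (Phi' k \<gamma> u) / (2 * \<gamma>)) / \<gamma>) at_top at_top"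
    using gamma_pos
    by (intro filterlim_divide_const_at_top filterlim_compose[OF ln_at_top]) auto
  define u0 where "u0 = Psi' k \<gamma> (ln 2 / \<gamma>)"
  have "u0 \<ge> 0" "Phi' k \<gamma> u0 = ln 2 / \<gamma>"
    using gamma_pos Psi'_0 strict_mono_onD[OF strict_mono_on_Psi', of 0 "ln 2 / \<gamma>"] Phi'_Psi'
    by (auto simp: u0_def)
  show "eventually (\<lambda>u. ln (k (Phi' k \<gamma> u) / (2 * \<gamma>)) / \<gamma> \<le> Phi0' \<gamma> u - Phi' k \<gamma> u) at_top"
    using eventually_ge_at_top[of u0]
  proof eventually_elim
    case (elim u)
    then have "ln 2 / \<gamma> \<le> Phi' k \<gamma> u"
      using mono_onD[OF mono_on_Phi', of u0 u] \<open>u0 \<ge> 0\<close> \<open>Phi' k \<gamma> u0 = ln 2 / \<gamma>\<close> by simp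
    then show ?case
      using Phi0'_Psi'_ge[of "Phi' k \<gamma> u"] Psi'_Phi'[of u] elim \<open>u0 \<ge> 0\<close> by simp
  qed
qed

lemma Lambda_eq_integral:
  assumes "x \<ge> 0"
  shows "Lambda k \<gamma> x = integral {0..x} (\<lambda>u. Phi0' \<gamma> u - Phi' k \<gamma> u)"
    and "(\<lambda>u. Phi0' \<gamma> u - Phi' k \<gamma> u) integrable_on {0..x}"
proof -
  have Phi0': "(Phi0' \<gamma> has_integral Phi0 \<gamma> x) {0..x}"
    using has_integral_Phi0'[OF gamma_pos assms] .
  have Phi': "Phi' k \<gamma> integrable_on {0..x}"
    by (rule integrable_on_mono_on, rule mono_on_subset[OF mono_on_Phi']) auto
  show "Lambda k \<gamma> x = integral {0..x} (\<lambda>u. Phi0' \<gamma> u - Phi' k \<gamma> u)"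
    using integral_diff[OF has_integral_integrable[OF Phi0'] Phi'] integral_unique[OF Phi0']
    by (simp add: Lambda_def Phi_def)
  show "(\<lambda>u. Phi0' \<gamma> u - Phi' k \<gamma> u) integrable_on {0..x}"
    by (rule integrable_diff[OF has_integral_integrable[OF Phi0'] Phi'])
qed

theorem filterlim_Lambda_over_x: "filterlim (\<lambda>x. Lambda k \<gamma> x / x) at_top at_top"
proof -
  have "eventually (\<lambda>x. Lambda k \<gamma> x / x
      = integral {0..x} (\<lambda>u. Phi0' \<gamma> u - Phi' k \<gamma> u) / x) at_top"
    using eventually_ge_at_top[of 0] by eventually_elim (simp add: Lambda_eq_integral(1))
  then show ?thesis
    by (subst filterlim_cong[OF refl refl], assumption)
      (rule filterlim_integral_average_at_top[OF filterlim_Phi0'_minus_Phi' Lambda_eq_integral(2)])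
qed

end

theorem proposition3p3:
  fixes k :: "real \<Rightarrow> real" and \<gamma> :: real and D :: "nat \<Rightarrow> real \<Rightarrow> real"
  assumes gamma_pos: "\<gamma> > 0"
    and k_nonneg: "\<And>x. x \<ge> 0 \<Longrightarrow> k x \<ge> 0"
    and D0: "D 0 = k"
    and smooth: "\<And>n x. x \<ge> 0 \<Longrightarrow> (D n has_real_derivative D (Suc n) x) (at x within {0..})"
    and k0: "k 0 = \<gamma>"
    and kderiv_pos: "\<And>x. x \<ge> 0 \<Longrightarrow> D 1 x > 0"
    and k_infty: "filterlim k at_top at_top"
  shows "filterlim (\<lambda>x. Lambda k \<gamma> x / x) at_top at_top"
proof -
  have k_deriv: "\<And>x. x \<ge> 0 \<Longrightarrow> (k has_real_derivative D 1 x) (at x within {0..})"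
    using smooth[of _ 0] D0 by simp
  interpret increasing_rate k \<gamma>
  proof
    show "continuous_on {0..} k"
      using k_deriv by (intro DERIV_continuous_on) auto
    show "mono_on {0..} k"
      using k_deriv kderiv_pos
      by (intro mono_on_atLeast_if_deriv_nonneg[where f' = "D 1"]) (auto intro: less_imp_le)
  qed (use gamma_pos k0 k_infty in auto)
  show ?thesis
    by (rule filterlim_Lambda_over_x)
qed

end
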